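(* Consider the rectangular problem $$\max_{\alpha\in\mathbb{R}^{|\mathcal A|\times|\mathcal T|}}\ \sum_{i\in\mathcal A}\sum_{j\in\mathcal T} w_{ij}\alpha_{ij}\quad\text{s.t.}\quad \sum_{j\in\mathcal T}\alpha_{ij}\le 1\ (\forall i),\ \ \sum_i\alpha_{iP}=1,\ \ \sum_i\alpha_{ij}\le 1\ (\forall j\in\mathcal T\setminus\{P\}),\ \ 0\le\alpha_{ij}\le 1,$$ with $|\mathcal A|>|\mathcal T|$. Let $K=|\mathcal A|-|\mathcal T|$ and introduce $K$ secondary trajectory tasks $P'_1,\dots,P'_K$ with weights $w_{iP'_k}=(d(q_P,x_i)+\epsilon')^{-1}$ for all agents $i$ and all $k$, where $\epsilon'>0$. Consider the augmented square problem over $\tilde\alpha\in\mathbb{R}^{|\mathcal A|\times(|\mathcal T|+K)}$: $$\max\ \sum_{i}\sum_{j\in\mathcal T\cup\{P'_1,\dots,P'_K\}} w_{ij}\tilde\alpha_{ij}\quad\text{s.t. every row sum and every column sum of }\tilde\alpha\text{ equals }1,\ 0\le\tilde\alpha_{ij}\le1.$$ Then there exists $\epsilon'_0>0$ (depending on the agent positions, task locations and $\epsilon$) such that for every $\epsilon'>\epsilon'_0$, the restriction of any optimal solution $\tilde\alpha$ of the augmented problem to the columns indexed by $\mathcal T$ is an optimal solution of the rectangular problem; i.e., introducing the secondary trajectory tasks does not alter the assignment of the trajectory task $P$ and the online tasks.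
   Context: A team consists of a finite set $\mathcal A$ of agents; agent $i$ has position $x_i\in\mathbb{R}^m$. The task set $\mathcal T$ consists of one trajectory task $P$, with location $q_P\in\mathbb{R}^m$ (the next reference waypoint), and online tasks $O_j$ with locations $q_{O_j}\in\mathbb{R}^m$. $d(\cdot,\cdot)$ is Euclidean distance and $\epsilon>0$ is fixed. The weights are $w_{iP}=(d(q_P,x_i)+\epsilon)^{-1}$ and $w_{iO_j}=(d(q_{O_j},x_i)+\epsilon)^{-1}$; in particular $0<w_{ij}\le\epsilon^{-1}$. The variable $\alpha_{ij}$ is the splitting (assignment) coefficient of agent $i$ to task $j$. *)

theory Defs
  imports "HOL-Analysis.Analysis"
begin

definition weight :: "real \<Rightarrow> 'e::metric_space \<Rightarrow> 'e \<Rightarrow> real" where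
  "weight eps qj xi = inverse (dist qj xi + eps)"

definition rect_objective ::
  "real \<Rightarrow> 'a set \<Rightarrow> 't set \<Rightarrow> ('a \<Rightarrow> 'e::metric_space) \<Rightarrow> ('t \<Rightarrow> 'e)
     \<Rightarrow> ('a \<Rightarrow> 't \<Rightarrow> real) \<Rightarrow> real" where
  "rect_objective eps A T x q \<alpha> = (\<Sum>i\<in>A. \<Sum>j\<in>T. weight eps (q j) (x i) * \<alpha> i j)"

definition rect_feasible :: "'a set \<Rightarrow> 't set \<Rightarrow> 't \<Rightarrow> ('a \<Rightarrow> 't \<Rightarrow> real) \<Rightarrow> bool" where
  "rect_feasible A T P \<alpha> \<longleftrightarrow>
     (\<forall>i\<in>A. (\<Sum>j\<in>T. \<alpha> i j) \<le> 1) \<and>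
     (\<Sum>i\<in>A. \<alpha> i P) = 1 \<and>
     (\<forall>j\<in>T - {P}. (\<Sum>i\<in>A. \<alpha> i j) \<le> 1) \<and>
     (\<forall>i\<in>A. \<forall>j\<in>T. 0 \<le> \<alpha> i j \<and> \<alpha> i j \<le> 1)"

definition rect_optimal ::
  "real \<Rightarrow> 'a set \<Rightarrow> 't set \<Rightarrow> 't \<Rightarrow> ('a \<Rightarrow> 'e::metric_space) \<Rightarrow> ('t \<Rightarrow> 'e)
     \<Rightarrow> ('a \<Rightarrow> 't \<Rightarrow> real) \<Rightarrow> bool" where
  "rect_optimal eps A T P x q \<alpha> \<longleftrightarrow>
     rect_feasible A T P \<alpha> \<and>
     (\<forall>\<beta>. rect_feasible A T P \<beta> \<longrightarrow> rect_objective eps A T x q \<beta> \<le> rect_objective eps A T x q \<alpha>)"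

text \<open>Augmented square problem. Columns are Inl j for tasks j in T and
  Inr k (k < K) for the secondary trajectory tasks P'_k.\<close>
definition aug_cols :: "'t set \<Rightarrow> nat \<Rightarrow> ('t + nat) set" where
  "aug_cols T K = Inl ` T \<union> Inr ` {..<K}"

definition aug_weight ::
  "real \<Rightarrow> real \<Rightarrow> 't \<Rightarrow> ('a \<Rightarrow> 'e::metric_space) \<Rightarrow> ('t \<Rightarrow> 'e) \<Rightarrow> 'a \<Rightarrow> 't + nat \<Rightarrow> real" where
  "aug_weight eps eps' P x q i c =
     (case c of Inl j \<Rightarrow> weight eps (q j) (x i) | Inr k \<Rightarrow> weight eps' (q P) (x i))"

definition aug_objective ::
  "real \<Rightarrow> real \<Rightarrow> 'a set \<Rightarrow> 't set \<Rightarrow> 't \<Rightarrow> nat \<Rightarrow> ('a \<Rightarrow> 'e::metric_space) \<Rightarrow> ('t \<Rightarrow> 'e)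
     \<Rightarrow> ('a \<Rightarrow> 't + nat \<Rightarrow> real) \<Rightarrow> real" where
  "aug_objective eps eps' A T P K x q \<alpha> =
     (\<Sum>i\<in>A. \<Sum>c\<in>aug_cols T K. aug_weight eps eps' P x q i c * \<alpha> i c)"

definition aug_feasible :: "'a set \<Rightarrow> 't set \<Rightarrow> nat \<Rightarrow> ('a \<Rightarrow> 't + nat \<Rightarrow> real) \<Rightarrow> bool" where
  "aug_feasible A T K \<alpha> \<longleftrightarrow>
     (\<forall>i\<in>A. (\<Sum>c\<in>aug_cols T K. \<alpha> i c) = 1) \<and>
     (\<forall>c\<in>aug_cols T K. (\<Sum>i\<in>A. \<alpha> i c) = 1) \<and>
     (\<forall>i\<in>A. \<forall>c\<in>aug_cols T K. 0 \<le> \<alpha> i c \<and> \<alpha> i c \<le> 1)"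

definition aug_optimal ::
  "real \<Rightarrow> real \<Rightarrow> 'a set \<Rightarrow> 't set \<Rightarrow> 't \<Rightarrow> nat \<Rightarrow> ('a \<Rightarrow> 'e::metric_space) \<Rightarrow> ('t \<Rightarrow> 'e)
     \<Rightarrow> ('a \<Rightarrow> 't + nat \<Rightarrow> real) \<Rightarrow> bool" where
  "aug_optimal eps eps' A T P K x q \<alpha> \<longleftrightarrow>
     aug_feasible A T K \<alpha> \<and>
     (\<forall>\<beta>. aug_feasible A T K \<beta> \<longrightarrow>
        aug_objective eps eps' A T P K x q \<beta> \<le> aug_objective eps eps' A T P K x q \<alpha>)"

end

theory Submission
  imports Defs "HOL-Library.FuncSet"
begin

text \<open>The constraints of the augmented problem make its feasible points doubly stochastic
  matrices, so by the Birkhoff--von Neumann theorem (proved here from Hall's marriage theorem)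
  each of them is a convex combination of permutation matrices; both objectives are linear.
  Restricting to the columns of T, the maximum of the rectangular objective over restrictions of
  permutation matrices bounds every augmented point, and it also bounds every rectangular feasible
  point, since such a point can be enlarged entrywise to the restriction of an augmented one.
  The secondary columns contribute at most card A / eps' to the augmented objective. Once this is
  below the gap between the best and the second best vertex value, every permutation matrix
  carrying positive weight in an optimal augmented solution has a best restriction, so the
  restriction of the solution attains the rectangular maximum.\<close>

section \<open>Hall's marriage theorem\<close>

definition hall_condition :: "'c set \<Rightarrow> ('c \<Rightarrow> 'a set) \<Rightarrow> bool" where
  "hall_condition C N \<longleftrightarrow> (\<forall>J\<subseteq>C. card J \<le> card (\<Union>(N ` J)))"

lemma hall_condition_tight_remainder:
  assumes "finite C" "\<And>c. c \<in> C \<Longrightarrow> finite (N c)" "hall_condition C N"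
    and J: "J \<subseteq> C" "card (\<Union>(N ` J)) = card J"
  shows "hall_condition (C - J) (\<lambda>c. N c - \<Union>(N ` J))"
  unfolding hall_condition_def
proof (intro allI impI)
  fix J' assume J': "J' \<subseteq> C - J"
  have fin_JJ: "finite (J' \<union> J)" using J' J(1) assms(1) finite_subset by blast
  have fin: "finite (\<Union>(N ` (J' \<union> J)))" using fin_JJ J(1) J' assms(2) by auto
  have sub: "\<Union>(N ` J) \<subseteq> \<Union>(N ` (J' \<union> J))" by auto
  have "\<Union>((\<lambda>c. N c - \<Union>(N ` J)) ` J') = \<Union>(N ` (J' \<union> J)) - \<Union>(N ` J)" by auto
  then have "card (\<Union>((\<lambda>c. N c - \<Union>(N ` J)) ` J')) = card (\<Union>(N ` (J' \<union> J))) - card J"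
    using card_Diff_subset[OF finite_subset[OF sub fin] sub] J(2) by simp
  moreover have "card (J' \<union> J) = card J' + card J"
    using J' fin_JJ by (intro card_Un_disjoint) auto
  moreover have "card (J' \<union> J) \<le> card (\<Union>(N ` (J' \<union> J)))"
    using assms(3) J(1) J' unfolding hall_condition_def by blast
  ultimately show "card J' \<le> card (\<Union>((\<lambda>c. N c - \<Union>(N ` J)) ` J'))" by linarith
qed

lemma hall_condition_surplus_remainder:
  assumes surplus: "\<And>J. J \<subseteq> C \<Longrightarrow> J \<noteq> {} \<Longrightarrow> J \<noteq> C \<Longrightarrow> card J < card (\<Union>(N ` J))"
    and "c0 \<in> C"
  shows "hall_condition (C - {c0}) (\<lambda>c. N c - {a})"
  unfolding hall_condition_def
proof (intro allI impI)
  fix J assume J: "J \<subseteq> C - {c0}"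
  show "card J \<le> card (\<Union>((\<lambda>c. N c - {a}) ` J))"
  proof (cases "J = {}")
    case False
    then have "card J < card (\<Union>(N ` J))" using surplus J assms(2) by blast
    moreover have "card (\<Union>(N ` J)) - 1 \<le> card (\<Union>(N ` J) - {a})"
      using diff_card_le_card_Diff[of "{a}" "\<Union>(N ` J)"] by simp
    moreover have "\<Union>((\<lambda>c. N c - {a}) ` J) = \<Union>(N ` J) - {a}" by auto
    ultimately show ?thesis by simp
  qed simp
qed

lemma inj_on_if_separated:
  assumes "inj_on f J" "inj_on g (C - J)" "\<forall>c\<in>J. f c \<in> X" "\<forall>c\<in>C - J. g c \<notin> X"
  shows "inj_on (\<lambda>c. if c \<in> J then f c else g c) C"
  using assms unfolding inj_on_def by (metis Diff_iff)

theorem hall_marriage: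
  fixes N :: "'c \<Rightarrow> 'a set"
  assumes "finite C" "\<And>c. c \<in> C \<Longrightarrow> finite (N c)" "hall_condition C N"
  shows "\<exists>f. inj_on f C \<and> (\<forall>c\<in>C. f c \<in> N c)"
  using assms
proof (induction "card C" arbitrary: C N rule: less_induct)
  case less
  show ?case
  proof (cases "\<exists>J. J \<subseteq> C \<and> J \<noteq> {} \<and> J \<noteq> C \<and> card (\<Union>(N ` J)) = card J")
    case True
    then obtain J where J: "J \<subseteq> C" "J \<noteq> {}" "J \<noteq> C" "card (\<Union>(N ` J)) = card J" by blast
    have "hall_condition J N" using less.prems(3) J(1) unfolding hall_condition_def by blast
    moreover have "card J < card C" using J less.prems(1) by (meson psubsetI psubset_card_mono)
    ultimately obtain f1 where f1: "inj_on f1 J" "\<forall>c\<in>J. f1 c \<in> N c"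
      using less J(1) finite_subset by blast
    define N' where "N' c = N c - \<Union>(N ` J)" for c
    have "card (C - J) < card C"
      using J less.prems(1) by (intro psubset_card_mono) auto
    moreover have "hall_condition (C - J) N'"
      unfolding N'_def using less.prems J(1,4) by (rule hall_condition_tight_remainder)
    ultimately obtain f2 where f2: "inj_on f2 (C - J)" "\<forall>c\<in>C - J. f2 c \<in> N' c"
      using less.hyps[of "C - J" N'] less.prems(1,2) by (auto simp: N'_def)
    have "inj_on (\<lambda>c. if c \<in> J then f1 c else f2 c) C"
      using f1 f2 by (intro inj_on_if_separated[where X = "\<Union>(N ` J)"]) (auto simp: N'_def)
    moreover have "\<forall>c\<in>C. (if c \<in> J then f1 c else f2 c) \<in> N c"
      using f1(2) f2(2) by (auto simp: N'_def)
    ultimately show ?thesis by blast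
  next
    case no_tight: False
    show ?thesis
    proof (cases "C = {}")
      case False
      then obtain c0 where c0: "c0 \<in> C" by blast
      have "card {c0} \<le> card (\<Union>(N ` {c0}))"
        using less.prems(3) c0 unfolding hall_condition_def by blast
      then obtain a where a: "a \<in> N c0" by fastforce
      have "\<And>J. J \<subseteq> C \<Longrightarrow> J \<noteq> {} \<Longrightarrow> J \<noteq> C \<Longrightarrow> card J < card (\<Union>(N ` J))"
        using less.prems(3) no_tight unfolding hall_condition_def by (metis le_neq_implies_less)
      then have "hall_condition (C - {c0}) (\<lambda>c. N c - {a})"
        using c0 by (rule hall_condition_surplus_remainder)
      moreover have "card (C - {c0}) < card C" using less.prems(1) c0 by (rule card_Diff1_less)
      ultimately obtain f where f: "inj_on f (C - {c0})" "\<forall>c\<in>C - {c0}. f c \<in> N c - {a}"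
        using less.hyps[of "C - {c0}" "\<lambda>c. N c - {a}"] less.prems(1,2) by auto
      have "inj_on (f(c0 := a)) C" using f c0 by (auto simp: inj_on_def)
      moreover have "\<forall>c\<in>C. (f(c0 := a)) c \<in> N c" using f(2) a by auto
      ultimately show ?thesis by blast
    qed simp
  qed
qed

section \<open>The Birkhoff--von Neumann theorem\<close>

definition extensional_bijections :: "'c set \<Rightarrow> 'a set \<Rightarrow> ('c \<Rightarrow> 'a) set" where
  "extensional_bijections C A = {g \<in> C \<rightarrow>\<^sub>E A. bij_betw g C A}"

definition perm_matrix :: "('c \<Rightarrow> 'a) \<Rightarrow> 'a \<Rightarrow> 'c \<Rightarrow> real" where
  "perm_matrix g i c = (if g c = i then 1 else 0)"

lemma finite_extensional_bijections:
  "finite A \<Longrightarrow> finite C \<Longrightarrow> finite (extensional_bijections C A)"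
  unfolding extensional_bijections_def by (rule finite_subset[OF _ finite_PiE]) auto

lemma restrict_in_extensional_bijections:
  assumes "inj_on f C" "f ` C \<subseteq> A" "finite A" "card A = card C"
  shows "restrict f C \<in> extensional_bijections C A"
proof -
  have "f ` C = A" using assms card_image card_subset_eq by metis
  then have "bij_betw (restrict f C) C A"
    using assms(1) bij_betw_imageI bij_betw_cong[of C f "restrict f C" A] by auto
  then show ?thesis using assms(2) unfolding extensional_bijections_def by auto
qed

lemma extensional_bijections_nonempty:
  assumes "finite A" "finite C" "card A = card C"
  shows "extensional_bijections C A \<noteq> {}"
proof -
  obtain h where "bij_betw h C A" using finite_same_card_bij assms by metis
  then have "restrict h C \<in> extensional_bijections C A"
    using assms by (intro restrict_in_extensional_bijections) (auto simp: bij_betw_def)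
  then show ?thesis by blast
qed

lemma sum_perm_matrix_row:
  assumes "bij_betw g C A" "finite A" "i \<in> A"
  shows "(\<Sum>c\<in>C. perm_matrix g i c) = 1"
proof -
  have "(\<Sum>c\<in>C. perm_matrix g i c) = (\<Sum>i'\<in>A. if i' = i then 1 else 0)"
    unfolding perm_matrix_def by (rule sum.reindex_bij_betw[OF assms(1)])
  also have "\<dots> = 1" using assms(2,3) by simp
  finally show ?thesis .
qed

lemma sum_perm_matrix_col:
  assumes "finite A" "g c \<in> A"
  shows "(\<Sum>i\<in>A. perm_matrix g i c) = 1"
  using assms by (simp add: perm_matrix_def sum.delta)

lemma doubly_stochastic_positive_bijection:
  fixes \<beta> :: "'a \<Rightarrow> 'c \<Rightarrow> real"
  assumes fin: "finite A" "finite C" "card A = card C" and "0 < t"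
    and nonneg: "\<forall>i\<in>A. \<forall>c\<in>C. 0 \<le> \<beta> i c"
    and rows: "\<forall>i\<in>A. (\<Sum>c\<in>C. \<beta> i c) = t" and cols: "\<forall>c\<in>C. (\<Sum>i\<in>A. \<beta> i c) = t"
  shows "\<exists>g\<in>extensional_bijections C A. \<forall>c\<in>C. 0 < \<beta> (g c) c"
proof -
  define N where "N c = {i\<in>A. 0 < \<beta> i c}" for c
  have "hall_condition C N"
    unfolding hall_condition_def
  proof (intro allI impI)
    fix J assume J: "J \<subseteq> C"
    define U where "U = \<Union>(N ` J)"
    have UA: "U \<subseteq> A" by (auto simp: U_def N_def)
    \<comment> \<open>the mass t * |J| of the columns in J lies in the rows U, which carry only t * |U|\<close>
    have "t * card J = (\<Sum>c\<in>J. t)" by simp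
    also have "\<dots> = (\<Sum>c\<in>J. \<Sum>i\<in>A. \<beta> i c)" using cols J by (intro sum.cong) auto
    also have "\<dots> = (\<Sum>c\<in>J. \<Sum>i\<in>U. \<beta> i c)"
    proof (rule sum.cong[OF refl], rule sum.mono_neutral_right[OF fin(1) UA], intro ballI)
      fix c i assume "c \<in> J" "i \<in> A - U"
      then show "\<beta> i c = 0" using nonneg J by (force simp: U_def N_def)
    qed
    also have "\<dots> = (\<Sum>i\<in>U. \<Sum>c\<in>J. \<beta> i c)" by (rule sum.swap)
    also have "\<dots> \<le> (\<Sum>i\<in>U. \<Sum>c\<in>C. \<beta> i c)"
      using nonneg UA J by (intro sum_mono sum_mono2[OF fin(2) J]) auto
    also have "\<dots> = t * card U" using rows UA by (simp add: subset_iff)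
    finally show "card J \<le> card (\<Union>(N ` J))" using \<open>0 < t\<close> by (simp add: U_def)
  qed
  moreover have "finite (N c)" for c using fin(1) by (simp add: N_def)
  ultimately obtain f where f: "inj_on f C" "\<forall>c\<in>C. f c \<in> N c"
    using hall_marriage[OF fin(2)] by blast
  then have "restrict f C \<in> extensional_bijections C A"
    using fin by (intro restrict_in_extensional_bijections) (auto simp: N_def)
  moreover have "\<forall>c\<in>C. 0 < \<beta> (restrict f C c) c" using f(2) by (simp add: N_def)
  ultimately show ?thesis by blast
qed

definition entry_support :: "'a set \<Rightarrow> 'c set \<Rightarrow> ('a \<Rightarrow> 'c \<Rightarrow> real) \<Rightarrow> ('a \<times> 'c) set" where
  "entry_support A C \<beta> = {(i, c) \<in> A \<times> C. \<beta> i c \<noteq> 0}"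

lemma peel_perm_matrix:
  fixes \<beta> :: "'a \<Rightarrow> 'c \<Rightarrow> real"
  assumes fin: "finite A" "finite C" and bij: "bij_betw g C A"
    and nonneg: "\<forall>i\<in>A. \<forall>c\<in>C. 0 \<le> \<beta> i c"
    and rows: "\<forall>i\<in>A. (\<Sum>c\<in>C. \<beta> i c) = t" and cols: "\<forall>c\<in>C. (\<Sum>i\<in>A. \<beta> i c) = t"
    and l: "0 < l" "\<forall>c\<in>C. l \<le> \<beta> (g c) c" and c0: "c0 \<in> C" "\<beta> (g c0) c0 = l"
  defines "\<beta>' \<equiv> \<lambda>i c. \<beta> i c - l * perm_matrix g i c"
  shows "\<forall>i\<in>A. \<forall>c\<in>C. 0 \<le> \<beta>' i c"
    and "\<forall>i\<in>A. (\<Sum>c\<in>C. \<beta>' i c) = t - l" and "\<forall>c\<in>C. (\<Sum>i\<in>A. \<beta>' i c) = t - l"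
    and "card (entry_support A C \<beta>') < card (entry_support A C \<beta>)"
proof -
  show "\<forall>i\<in>A. \<forall>c\<in>C. 0 \<le> \<beta>' i c"
    using nonneg l(2) by (auto simp: \<beta>'_def perm_matrix_def)
  show "\<forall>i\<in>A. (\<Sum>c\<in>C. \<beta>' i c) = t - l"
    using rows sum_perm_matrix_row[OF bij fin(1)]
    by (simp add: \<beta>'_def sum_subtractf flip: sum_distrib_left)
  show "\<forall>c\<in>C. (\<Sum>i\<in>A. \<beta>' i c) = t - l"
    using cols bij_betwE[OF bij] fin(1)
    by (simp add: \<beta>'_def sum_subtractf sum_perm_matrix_col flip: sum_distrib_left)
  have "entry_support A C \<beta>' \<subseteq> entry_support A C \<beta>"
  proof
    fix p assume "p \<in> entry_support A C \<beta>'"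
    then obtain i c where p: "p = (i, c)" "i \<in> A" "c \<in> C" "\<beta>' i c \<noteq> 0"
      by (auto simp: entry_support_def)
    have "\<beta> i c \<noteq> 0"
    proof
      assume "\<beta> i c = 0"
      then have "g c \<noteq> i" using l p(3) by force
      then show False using p(4) \<open>\<beta> i c = 0\<close> by (simp add: \<beta>'_def perm_matrix_def)
    qed
    then show "p \<in> entry_support A C \<beta>" using p by (simp add: entry_support_def)
  qed
  moreover have "(g c0, c0) \<in> entry_support A C \<beta> - entry_support A C \<beta>'"
    using c0 l(1) bij_betw_apply[OF bij c0(1)] by (simp add: entry_support_def \<beta>'_def perm_matrix_def)
  moreover have "finite (entry_support A C \<beta>)"
    using finite_subset[of "entry_support A C \<beta>" "A \<times> C"] fin by (auto simp: entry_support_def)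
  ultimately show "card (entry_support A C \<beta>') < card (entry_support A C \<beta>)"
    by (metis Diff_iff psubsetI psubset_card_mono)
qed

theorem birkhoff_von_neumann:
  fixes \<beta> :: "'a \<Rightarrow> 'c \<Rightarrow> real"
  assumes fin: "finite A" "finite C" "card A = card C"
    and "\<forall>i\<in>A. \<forall>c\<in>C. 0 \<le> \<beta> i c"
    and "\<forall>i\<in>A. (\<Sum>c\<in>C. \<beta> i c) = t" "\<forall>c\<in>C. (\<Sum>i\<in>A. \<beta> i c) = t"
  shows "\<exists>\<mu>. (\<forall>g\<in>extensional_bijections C A. 0 \<le> \<mu> g) \<and>
           (\<forall>i\<in>A. \<forall>c\<in>C. \<beta> i c = (\<Sum>g\<in>extensional_bijections C A. \<mu> g * perm_matrix g i c))"
  using assms(4-6)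
proof (induction "card (entry_support A C \<beta>)" arbitrary: \<beta> t rule: less_induct)
  case less
  let ?B = "extensional_bijections C A"
  show ?case
  proof (cases "0 < t \<and> C \<noteq> {}")
    case False
    have "\<beta> i c = 0" if "i \<in> A" "c \<in> C" for i c
    proof -
      have "(\<Sum>i\<in>A. \<beta> i c) \<le> 0" using False less.prems(3) that(2) by auto
      then show ?thesis using less.prems(1) that fin(1) sum_nonneg_eq_0_iff
        by (metis (no_types, lifting) dual_order.antisym sum_nonneg)
    qed
    then show ?thesis by (intro exI[of _ "\<lambda>_. 0"]) simp
  next
    case True
    then obtain g where g: "g \<in> ?B" "\<forall>c\<in>C. 0 < \<beta> (g c) c"
      using doubly_stochastic_positive_bijection[OF fin] less.prems by blast
    have bij: "bij_betw g C A" using g(1) by (simp add: extensional_bijections_def)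
    define l where "l = Min ((\<lambda>c. \<beta> (g c) c) ` C)"
    have "l \<in> (\<lambda>c. \<beta> (g c) c) ` C" unfolding l_def using fin(2) True by (intro Min_in) auto
    then obtain c0 where c0: "c0 \<in> C" "\<beta> (g c0) c0 = l" by auto
    have l: "0 < l" "\<forall>c\<in>C. l \<le> \<beta> (g c) c" using c0 g(2) fin(2) by (auto simp: l_def)
    obtain \<mu> where \<mu>: "\<forall>h\<in>?B. 0 \<le> \<mu> h"
      "\<forall>i\<in>A. \<forall>c\<in>C. \<beta> i c - l * perm_matrix g i c = (\<Sum>h\<in>?B. \<mu> h * perm_matrix h i c)"
      using less.hyps[OF peel_perm_matrix(4,1-3)[OF fin(1,2) bij less.prems l c0]] by blast
    show ?thesis
    proof (intro exI[of _ "\<lambda>h. \<mu> h + (if h = g then l else 0)"] conjI ballI)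
      show "0 \<le> \<mu> h + (if h = g then l else 0)" if "h \<in> ?B" for h
        using \<mu>(1) l(1) that by simp
      fix i c assume "i \<in> A" "c \<in> C"
      have "(\<Sum>h\<in>?B. (\<mu> h + (if h = g then l else 0)) * perm_matrix h i c)
          = (\<Sum>h\<in>?B. \<mu> h * perm_matrix h i c) + l * perm_matrix g i c"
        using g(1) finite_extensional_bijections[OF fin(1,2)]
        by (simp add: distrib_right sum.distrib if_distrib[of "\<lambda>x. x * _"] sum.delta cong: if_cong)
      moreover have "\<beta> i c - l * perm_matrix g i c = (\<Sum>h\<in>?B. \<mu> h * perm_matrix h i c)"
        using \<mu>(2) \<open>i \<in> A\<close> \<open>c \<in> C\<close> by blast
      ultimately show "\<beta> i c = (\<Sum>h\<in>?B. (\<mu> h + (if h = g then l else 0)) * perm_matrix h i c)"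
        by linarith
    qed
  qed
qed

corollary doubly_stochastic_convex_decomposition:
  fixes \<beta> :: "'a \<Rightarrow> 'c \<Rightarrow> real"
  assumes fin: "finite A" "finite C" "card A = card C" "C \<noteq> {}"
    and nonneg: "\<forall>i\<in>A. \<forall>c\<in>C. 0 \<le> \<beta> i c"
    and rows: "\<forall>i\<in>A. (\<Sum>c\<in>C. \<beta> i c) = 1" and cols: "\<forall>c\<in>C. (\<Sum>i\<in>A. \<beta> i c) = 1"
  shows "\<exists>\<mu>. (\<forall>g\<in>extensional_bijections C A. 0 \<le> \<mu> g) \<and> sum \<mu> (extensional_bijections C A) = 1 \<and>
           (\<forall>i\<in>A. \<forall>c\<in>C. \<beta> i c = (\<Sum>g\<in>extensional_bijections C A. \<mu> g * perm_matrix g i c))"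
proof -
  let ?B = "extensional_bijections C A"
  obtain \<mu> where \<mu>: "\<forall>g\<in>?B. 0 \<le> \<mu> g" "\<forall>i\<in>A. \<forall>c\<in>C. \<beta> i c = (\<Sum>g\<in>?B. \<mu> g * perm_matrix g i c)"
    using birkhoff_von_neumann[OF fin(1-3) nonneg rows cols] by blast
  obtain c where c: "c \<in> C" using fin(4) by blast
  have "1 = (\<Sum>i\<in>A. \<Sum>g\<in>?B. \<mu> g * perm_matrix g i c)" using cols \<mu>(2) c by simp
  also have "\<dots> = (\<Sum>g\<in>?B. \<mu> g * (\<Sum>i\<in>A. perm_matrix g i c))"
    by (subst sum.swap) (simp add: sum_distrib_left)
  also have "\<dots> = sum \<mu> ?B"
    using c fin(1) by (intro sum.cong refl)
      (auto simp: sum_perm_matrix_col extensional_bijections_def bij_betw_def)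
  finally show ?thesis using \<mu> by auto
qed

lemma sum_sum_linear_combination:
  fixes w :: "'a \<Rightarrow> 'c \<Rightarrow> real"
  assumes "\<forall>i\<in>A. \<forall>c\<in>C. \<alpha> i c = (\<Sum>g\<in>B. \<mu> g * M g i c)"
  shows "(\<Sum>i\<in>A. \<Sum>c\<in>C. w i c * \<alpha> i c) = (\<Sum>g\<in>B. \<mu> g * (\<Sum>i\<in>A. \<Sum>c\<in>C. w i c * M g i c))"
proof -
  have "(\<Sum>i\<in>A. \<Sum>c\<in>C. w i c * \<alpha> i c) = (\<Sum>i\<in>A. \<Sum>c\<in>C. \<Sum>g\<in>B. \<mu> g * (w i c * M g i c))"
    using assms by (intro sum.cong refl) (simp add: sum_distrib_left mult.left_commute)
  also have "\<dots> = (\<Sum>g\<in>B. \<Sum>i\<in>A. \<Sum>c\<in>C. \<mu> g * (w i c * M g i c))"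
    by (subst sum.swap, subst (2) sum.swap) simp
  finally show ?thesis by (simp add: sum_distrib_left)
qed

lemma convex_combination_le:
  fixes a :: "'b \<Rightarrow> real"
  assumes "\<forall>g\<in>B. 0 \<le> \<mu> g" "sum \<mu> B = 1" "\<forall>g\<in>B. a g \<le> m"
  shows "(\<Sum>g\<in>B. \<mu> g * a g) \<le> m"
proof -
  have "(\<Sum>g\<in>B. \<mu> g * a g) \<le> (\<Sum>g\<in>B. \<mu> g * m)"
    using assms(1,3) by (intro sum_mono mult_left_mono) auto
  then show ?thesis using assms(2) by (simp flip: sum_distrib_right)
qed

lemma convex_combination_eq_max:
  fixes a :: "'b \<Rightarrow> real"
  assumes "\<forall>g\<in>B. 0 \<le> \<mu> g" "sum \<mu> B = 1" "\<forall>g\<in>B. a g \<le> m"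
    and "(\<Sum>g\<in>B. \<mu> g * a g) = m" "g \<in> B" "0 < \<mu> g"
  shows "a g = m"
proof (rule ccontr)
  assume "a g \<noteq> m"
  then have "\<mu> g * a g < \<mu> g * m" using assms(3,5,6) by auto
  moreover have "finite B" using assms(2) sum.infinite by fastforce
  ultimately have "(\<Sum>g\<in>B. \<mu> g * a g) < (\<Sum>g\<in>B. \<mu> g * m)"
    using assms(1,3,5) by (intro sum_strict_mono_ex1) (auto intro: mult_left_mono)
  then show False using assms(2,4) by (simp flip: sum_distrib_right)
qed

section \<open>The rectangular and the augmented assignment problem\<close>

lemma finite_aug_cols: "finite T \<Longrightarrow> finite (aug_cols T K)"
  unfolding aug_cols_def by auto

lemma card_aug_cols:
  fixes T :: "'t set"
  assumes "finite T"
  shows "card (aug_cols T K) = card T + K"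
proof -
  have "card (aug_cols T K) = card (Inl ` T :: ('t + nat) set) + card (Inr ` {..<K} :: ('t + nat) set)"
    unfolding aug_cols_def using assms by (intro card_Un_disjoint) auto
  then show ?thesis by (simp add: card_image)
qed

lemma sum_aug_cols:
  assumes "finite T"
  shows "(\<Sum>c\<in>aug_cols T K. f c) = (\<Sum>j\<in>T. f (Inl j)) + (\<Sum>k<K. f (Inr k))"
proof -
  have "(\<Sum>c\<in>aug_cols T K. f c) = (\<Sum>c\<in>Inl ` T. f c) + (\<Sum>c\<in>Inr ` {..<K}. f c)"
    unfolding aug_cols_def using assms by (intro sum.union_disjoint) auto
  then show ?thesis by (simp add: sum.reindex)
qed

lemma weight_pos: "0 < eps \<Longrightarrow> 0 < weight eps q x"
  by (simp add: weight_def add_nonneg_pos)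

lemma weight_le: "0 < eps \<Longrightarrow> weight eps q x \<le> 1 / eps"
  by (simp add: weight_def inverse_eq_divide frac_le)

lemma aug_objective_split:
  assumes "finite T"
  shows "aug_objective eps eps' A T P K x q \<beta> =
    rect_objective eps A T x q (\<lambda>i j. \<beta> i (Inl j)) +
    (\<Sum>i\<in>A. weight eps' (q P) (x i) * (\<Sum>k<K. \<beta> i (Inr k)))"
  unfolding aug_objective_def rect_objective_def
  by (simp add: sum_aug_cols[OF assms] sum.distrib aug_weight_def sum_distrib_left)

lemma aug_feasible_row_split:
  assumes "aug_feasible A T K \<beta>" "finite T" "i \<in> A"
  shows "(\<Sum>j\<in>T. \<beta> i (Inl j)) + (\<Sum>k<K. \<beta> i (Inr k)) = 1"
    and "0 \<le> (\<Sum>j\<in>T. \<beta> i (Inl j))" and "0 \<le> (\<Sum>k<K. \<beta> i (Inr k))"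
  using assms by (auto simp: aug_feasible_def sum_aug_cols[symmetric] aug_cols_def intro!: sum_nonneg)

lemma secondary_objective_bounds:
  assumes "aug_feasible A T K \<beta>" "finite T" "0 < eps'"
  shows "0 \<le> (\<Sum>i\<in>A. weight eps' (q P) (x i) * (\<Sum>k<K. \<beta> i (Inr k)))"
    and "(\<Sum>i\<in>A. weight eps' (q P) (x i) * (\<Sum>k<K. \<beta> i (Inr k))) \<le> card A / eps'"
proof -
  have row: "0 \<le> (\<Sum>k<K. \<beta> i (Inr k)) \<and> (\<Sum>k<K. \<beta> i (Inr k)) \<le> 1" if "i \<in> A" for i
    using aug_feasible_row_split[OF assms(1,2) that] by linarith
  show "0 \<le> (\<Sum>i\<in>A. weight eps' (q P) (x i) * (\<Sum>k<K. \<beta> i (Inr k)))"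
  proof (rule sum_nonneg)
    fix i assume "i \<in> A"
    then show "0 \<le> weight eps' (q P) (x i) * (\<Sum>k<K. \<beta> i (Inr k))"
      using row less_imp_le[OF weight_pos[OF assms(3)]] by (intro mult_nonneg_nonneg) auto
  qed
  have "(\<Sum>i\<in>A. weight eps' (q P) (x i) * (\<Sum>k<K. \<beta> i (Inr k))) \<le> (\<Sum>i\<in>A. 1 / eps')"
  proof (rule sum_mono)
    fix i assume "i \<in> A"
    then have "weight eps' (q P) (x i) * (\<Sum>k<K. \<beta> i (Inr k)) \<le> weight eps' (q P) (x i)"
      using row less_imp_le[OF weight_pos[OF assms(3)]] by (intro mult_left_le) auto
    then show "weight eps' (q P) (x i) * (\<Sum>k<K. \<beta> i (Inr k)) \<le> 1 / eps'"
      using weight_le[OF assms(3)] by (meson order_trans)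
  qed
  then show "(\<Sum>i\<in>A. weight eps' (q P) (x i) * (\<Sum>k<K. \<beta> i (Inr k))) \<le> card A / eps'" by simp
qed

lemma aug_feasible_restrict:
  assumes "aug_feasible A T K \<beta>" "finite T" "P \<in> T"
  shows "rect_feasible A T P (\<lambda>i j. \<beta> i (Inl j))"
proof -
  have "\<forall>j\<in>T. (\<Sum>i\<in>A. \<beta> i (Inl j)) = 1"
    and "\<forall>i\<in>A. \<forall>j\<in>T. 0 \<le> \<beta> i (Inl j) \<and> \<beta> i (Inl j) \<le> 1"
    using assms(1) by (auto simp: aug_feasible_def aug_cols_def)
  moreover have "(\<Sum>j\<in>T. \<beta> i (Inl j)) \<le> 1" if "i \<in> A" for i
    using aug_feasible_row_split[OF assms(1,2) that] by linarith
  ultimately show ?thesis using assms(3) unfolding rect_feasible_def by auto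
qed

lemma rect_objective_mono:
  assumes "0 < eps" "\<forall>i\<in>A. \<forall>j\<in>T. \<beta> i j \<le> \<gamma> i j"
  shows "rect_objective eps A T x q \<beta> \<le> rect_objective eps A T x q \<gamma>"
  unfolding rect_objective_def
  using assms less_imp_le[OF weight_pos[OF assms(1)]] by (intro sum_mono mult_left_mono) auto

lemma substochastic_column_completion:
  fixes \<beta> :: "'a \<Rightarrow> 't \<Rightarrow> real"
  assumes "finite A" "finite T" "card T < card A"
    and nonneg: "\<forall>i\<in>A. \<forall>j\<in>T. 0 \<le> \<beta> i j"
    and rows: "\<forall>i\<in>A. (\<Sum>j\<in>T. \<beta> i j) \<le> 1" and cols: "\<forall>j\<in>T. (\<Sum>i\<in>A. \<beta> i j) \<le> 1"
  obtains \<beta>' where "\<forall>i\<in>A. \<forall>j\<in>T. \<beta> i j \<le> \<beta>' i j"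
    "\<forall>j\<in>T. (\<Sum>i\<in>A. \<beta>' i j) = 1" "\<forall>i\<in>A. (\<Sum>j\<in>T. \<beta>' i j) \<le> 1"
proof -
  define s where "s i = 1 - (\<Sum>j\<in>T. \<beta> i j)" for i
  define d where "d j = 1 - (\<Sum>i\<in>A. \<beta> i j)" for j
  define S where "S = (\<Sum>i\<in>A. s i)"
  have "(\<Sum>j\<in>T. \<Sum>i\<in>A. \<beta> i j) \<le> (\<Sum>j\<in>T. 1)" using cols by (intro sum_mono) auto
  moreover have "S = card A - (\<Sum>j\<in>T. \<Sum>i\<in>A. \<beta> i j)"
    unfolding S_def s_def by (simp add: sum_subtractf sum.swap[of _ A])
  moreover have "(\<Sum>j\<in>T. d j) = card T - (\<Sum>j\<in>T. \<Sum>i\<in>A. \<beta> i j)"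
    unfolding d_def by (simp add: sum_subtractf)
  ultimately have S_pos: "0 < S" and deficit_le: "(\<Sum>j\<in>T. d j) \<le> S"
    using assms(3) by (simp_all add: of_nat_less_iff[symmetric])
  have s_nonneg: "\<forall>i\<in>A. 0 \<le> s i" and d_nonneg: "\<forall>j\<in>T. 0 \<le> d j"
    using rows cols by (auto simp: s_def d_def)
  \<comment> \<open>the total row slack S covers the total column deficit, so each deficit d j can be
    spread over the rows in proportion to their slack\<close>
  define \<beta>' where "\<beta>' i j = \<beta> i j + s i * d j / S" for i j
  show ?thesis
  proof
    show "\<forall>i\<in>A. \<forall>j\<in>T. \<beta> i j \<le> \<beta>' i j"
      using s_nonneg d_nonneg S_pos by (simp add: \<beta>'_def)
    show "\<forall>j\<in>T. (\<Sum>i\<in>A. \<beta>' i j) = 1"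
      using S_pos by (simp add: \<beta>'_def d_def sum.distrib S_def flip: sum_divide_distrib sum_distrib_right)
    show "\<forall>i\<in>A. (\<Sum>j\<in>T. \<beta>' i j) \<le> 1"
    proof
      fix i assume "i \<in> A"
      have "s i * ((\<Sum>j\<in>T. d j) / S) \<le> s i"
        using s_nonneg \<open>i \<in> A\<close> deficit_le S_pos by (intro mult_left_le) auto
      then show "(\<Sum>j\<in>T. \<beta>' i j) \<le> 1"
        by (simp add: \<beta>'_def s_def sum.distrib sum_divide_distrib sum_distrib_left)
    qed
  qed
qed

lemma aug_feasible_fill_secondary:
  fixes \<beta> :: "'a \<Rightarrow> 't \<Rightarrow> real"
  assumes "finite T" "card A = card T + K" "0 < K"
    and nonneg: "\<forall>i\<in>A. \<forall>j\<in>T. 0 \<le> \<beta> i j"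
    and rows: "\<forall>i\<in>A. (\<Sum>j\<in>T. \<beta> i j) \<le> 1" and cols: "\<forall>j\<in>T. (\<Sum>i\<in>A. \<beta> i j) = 1"
  shows "aug_feasible A T K (\<lambda>i c. case c of Inl j \<Rightarrow> \<beta> i j | Inr k \<Rightarrow> (1 - (\<Sum>j\<in>T. \<beta> i j)) / K)"
    (is "aug_feasible A T K ?\<alpha>")
proof -
  have "finite A" using assms(2,3) card_ge_0_finite by force
  have "(\<Sum>i\<in>A. \<Sum>j\<in>T. \<beta> i j) = (\<Sum>j\<in>T. \<Sum>i\<in>A. \<beta> i j)" by (rule sum.swap)
  then have slack: "(\<Sum>i\<in>A. 1 - (\<Sum>j\<in>T. \<beta> i j)) = K"
    using cols assms(2) by (simp add: sum_subtractf)
  have "\<forall>i\<in>A. (\<Sum>c\<in>aug_cols T K. ?\<alpha> i c) = 1"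
    using assms(3) by (simp add: sum_aug_cols[OF assms(1)])
  moreover have "\<forall>c\<in>aug_cols T K. (\<Sum>i\<in>A. ?\<alpha> i c) = 1"
    using cols slack assms(3) by (auto simp: aug_cols_def simp flip: sum_divide_distrib)
  moreover have "\<forall>i\<in>A. \<forall>c\<in>aug_cols T K. 0 \<le> ?\<alpha> i c \<and> ?\<alpha> i c \<le> 1"
  proof (intro ballI)
    fix i c assume i: "i \<in> A" and c: "c \<in> aug_cols T K"
    have "0 \<le> (\<Sum>j\<in>T. \<beta> i j)" using nonneg i by (simp add: sum_nonneg)
    moreover have "\<beta> i j \<le> 1" if "j \<in> T" for j
      using cols that member_le_sum[of i A "\<lambda>i. \<beta> i j"] nonneg i \<open>finite A\<close> by auto
    ultimately show "0 \<le> ?\<alpha> i c \<and> ?\<alpha> i c \<le> 1"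
      using c rows i nonneg assms(3) by (auto simp: aug_cols_def divide_le_eq)
  qed
  ultimately show ?thesis unfolding aug_feasible_def by blast
qed

locale secondary_tasks =
  fixes eps :: real and A :: "'a set" and T :: "'t set" and P :: 't and K :: nat
    and x :: "'a \<Rightarrow> 'e::metric_space" and q :: "'t \<Rightarrow> 'e"
  assumes finite_A: "finite A" and finite_T: "finite T" and P_in_T: "P \<in> T"
    and eps_pos: "0 < eps" and card_A: "card A = card T + K" and K_pos: "0 < K"
begin

abbreviation assignments :: "('t + nat \<Rightarrow> 'a) set" where
  "assignments \<equiv> extensional_bijections (aug_cols T K) A"

definition perm_value :: "('t + nat \<Rightarrow> 'a) \<Rightarrow> real" where
  "perm_value g = rect_objective eps A T x q (\<lambda>i j. perm_matrix g i (Inl j))"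

definition rect_value :: real where
  "rect_value = Max (perm_value ` assignments)"

definition value_gap :: real where
  "value_gap = Min (insert 1 ((\<lambda>g. rect_value - perm_value g) ` {g \<in> assignments. perm_value g < rect_value}))"

lemma finite_assignments: "finite assignments"
  using finite_A finite_T by (simp add: finite_extensional_bijections finite_aug_cols)

lemma card_A_aug_cols: "card A = card (aug_cols T K)"
  using card_A finite_T by (simp add: card_aug_cols)

lemma assignments_nonempty: "assignments \<noteq> {}"
  by (rule extensional_bijections_nonempty[OF finite_A finite_aug_cols[OF finite_T] card_A_aug_cols])

lemma aug_feasible_perm_matrix:
  assumes "g \<in> assignments"
  shows "aug_feasible A T K (perm_matrix g)"
proof -
  have bij: "bij_betw g (aug_cols T K) A" using assms by (simp add: extensional_bijections_def)
  have "\<forall>i\<in>A. (\<Sum>c\<in>aug_cols T K. perm_matrix g i c) = 1"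
    by (intro ballI sum_perm_matrix_row[OF bij finite_A])
  moreover have "\<forall>c\<in>aug_cols T K. (\<Sum>i\<in>A. perm_matrix g i c) = 1"
    by (intro ballI sum_perm_matrix_col[OF finite_A] bij_betw_apply[OF bij])
  moreover have "\<forall>i\<in>A. \<forall>c\<in>aug_cols T K. 0 \<le> perm_matrix g i c \<and> perm_matrix g i c \<le> 1"
    by (simp add: perm_matrix_def)
  ultimately show ?thesis unfolding aug_feasible_def by blast
qed

lemma aug_feasible_decomposition:
  assumes "aug_feasible A T K \<beta>"
  shows "\<exists>\<mu>. (\<forall>g\<in>assignments. 0 \<le> \<mu> g) \<and> sum \<mu> assignments = 1 \<and>
           (\<forall>i\<in>A. \<forall>c\<in>aug_cols T K. \<beta> i c = (\<Sum>g\<in>assignments. \<mu> g * perm_matrix g i c))"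
  using assms finite_A finite_T card_A_aug_cols P_in_T
  by (intro doubly_stochastic_convex_decomposition)
    (auto simp: aug_feasible_def finite_aug_cols aug_cols_def)

lemma restrict_objective_decomposition:
  assumes "\<forall>i\<in>A. \<forall>c\<in>aug_cols T K. \<beta> i c = (\<Sum>g\<in>assignments. \<mu> g * perm_matrix g i c)"
  shows "rect_objective eps A T x q (\<lambda>i j. \<beta> i (Inl j)) = (\<Sum>g\<in>assignments. \<mu> g * perm_value g)"
  unfolding rect_objective_def perm_value_def
  using assms by (intro sum_sum_linear_combination) (auto simp: aug_cols_def)

lemma perm_value_le: "g \<in> assignments \<Longrightarrow> perm_value g \<le> rect_value"
  using finite_assignments by (simp add: rect_value_def)

lemma rect_value_attained: "\<exists>g\<in>assignments. perm_value g = rect_value"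
proof -
  have "rect_value \<in> perm_value ` assignments"
    unfolding rect_value_def using finite_assignments assignments_nonempty by (intro Max_in) auto
  then show ?thesis by auto
qed

lemma value_gap_pos: "0 < value_gap"
  unfolding value_gap_def using finite_assignments by (subst Min_gr_iff) auto

lemma perm_value_near_max:
  assumes "g \<in> assignments" "rect_value - value_gap < perm_value g"
  shows "perm_value g = rect_value"
proof (rule ccontr)
  assume "perm_value g \<noteq> rect_value"
  then have "perm_value g < rect_value" using perm_value_le[OF assms(1)] by simp
  then have "value_gap \<le> rect_value - perm_value g"
    unfolding value_gap_def using assms(1) finite_assignments by (intro Min_le) auto
  then show False using assms(2) by simp
qed

lemma restrict_objective_le:
  assumes "aug_feasible A T K \<beta>"
  shows "rect_objective eps A T x q (\<lambda>i j. \<beta> i (Inl j)) \<le> rect_value"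
proof -
  obtain \<mu> where \<mu>: "\<forall>g\<in>assignments. 0 \<le> \<mu> g" "sum \<mu> assignments = 1"
    "\<forall>i\<in>A. \<forall>c\<in>aug_cols T K. \<beta> i c = (\<Sum>g\<in>assignments. \<mu> g * perm_matrix g i c)"
    using aug_feasible_decomposition[OF assms] by blast
  show ?thesis unfolding restrict_objective_decomposition[OF \<mu>(3)]
    using \<mu>(1,2) perm_value_le by (intro convex_combination_le) auto
qed

lemma rect_feasible_objective_le:
  assumes "rect_feasible A T P \<beta>"
  shows "rect_objective eps A T x q \<beta> \<le> rect_value"
proof -
  have nonneg: "\<forall>i\<in>A. \<forall>j\<in>T. 0 \<le> \<beta> i j" and rows: "\<forall>i\<in>A. (\<Sum>j\<in>T. \<beta> i j) \<le> 1"
    using assms unfolding rect_feasible_def by auto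
  have cols: "\<forall>j\<in>T. (\<Sum>i\<in>A. \<beta> i j) \<le> 1"
    using assms unfolding rect_feasible_def by (metis Diff_iff order_refl singletonD)
  obtain \<beta>' where \<beta>': "\<forall>i\<in>A. \<forall>j\<in>T. \<beta> i j \<le> \<beta>' i j"
    "\<forall>j\<in>T. (\<Sum>i\<in>A. \<beta>' i j) = 1" "\<forall>i\<in>A. (\<Sum>j\<in>T. \<beta>' i j) \<le> 1"
    using substochastic_column_completion[OF finite_A finite_T _ nonneg rows cols] card_A K_pos
    by auto
  have "\<forall>i\<in>A. \<forall>j\<in>T. 0 \<le> \<beta>' i j" using nonneg \<beta>'(1) by (meson order_trans)
  then have "aug_feasible A T K (\<lambda>i c. case c of Inl j \<Rightarrow> \<beta>' i j | Inr k \<Rightarrow> (1 - (\<Sum>j\<in>T. \<beta>' i j)) / K)"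
    using finite_T card_A K_pos \<beta>'(2,3) by (intro aug_feasible_fill_secondary)
  from restrict_objective_le[OF this]
  have "rect_objective eps A T x q \<beta>' \<le> rect_value" by simp
  then show ?thesis using rect_objective_mono[OF eps_pos \<beta>'(1)] by (meson order_trans)
qed

lemma aug_optimal_mixes_optimal_vertices:
  assumes opt: "aug_optimal eps eps' A T P K x q \<alpha>"
    and \<mu>: "\<forall>g\<in>assignments. 0 \<le> \<mu> g" "sum \<mu> assignments = 1"
      "\<forall>i\<in>A. \<forall>c\<in>aug_cols T K. \<alpha> i c = (\<Sum>g\<in>assignments. \<mu> g * perm_matrix g i c)"
    and "g \<in> assignments" "0 < \<mu> g"
  shows "aug_objective eps eps' A T P K x q (perm_matrix g) = aug_objective eps eps' A T P K x q \<alpha>"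
proof -
  have le: "\<forall>g\<in>assignments. aug_objective eps eps' A T P K x q (perm_matrix g)
      \<le> aug_objective eps eps' A T P K x q \<alpha>"
    using opt aug_feasible_perm_matrix by (auto simp: aug_optimal_def)
  have "(\<Sum>g\<in>assignments. \<mu> g * aug_objective eps eps' A T P K x q (perm_matrix g))
      = aug_objective eps eps' A T P K x q \<alpha>"
    unfolding aug_objective_def using \<mu>(3) by (rule sum_sum_linear_combination[symmetric])
  then show ?thesis
    using convex_combination_eq_max[where a = "\<lambda>g. aug_objective eps eps' A T P K x q (perm_matrix g)"]
      \<mu>(1,2) le assms(5,6) by blast
qed

lemma aug_optimal_restrict_value:
  assumes eps': "card A / value_gap < eps'" and opt: "aug_optimal eps eps' A T P K x q \<alpha>"
  shows "rect_objective eps A T x q (\<lambda>i j. \<alpha> i (Inl j)) = rect_value"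
proof -
  let ?AO = "aug_objective eps eps' A T P K x q"
  have eps'_pos: "0 < eps'" using eps' value_gap_pos by (smt (verit) divide_nonneg_pos of_nat_0_le_iff)
  have small: "card A / eps' < value_gap"
    using eps' value_gap_pos eps'_pos by (simp add: field_simps)
  have feas: "aug_feasible A T K \<alpha>" and max: "\<forall>g\<in>assignments. ?AO (perm_matrix g) \<le> ?AO \<alpha>"
    using opt aug_feasible_perm_matrix by (auto simp: aug_optimal_def)
  obtain \<mu> where \<mu>: "\<forall>g\<in>assignments. 0 \<le> \<mu> g" "sum \<mu> assignments = 1"
    "\<forall>i\<in>A. \<forall>c\<in>aug_cols T K. \<alpha> i c = (\<Sum>g\<in>assignments. \<mu> g * perm_matrix g i c)"
    using aug_feasible_decomposition[OF feas] by blast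
  have split: "?AO (perm_matrix g) = perm_value g +
      (\<Sum>i\<in>A. weight eps' (q P) (x i) * (\<Sum>k<K. perm_matrix g i (Inr k)))" for g
    by (simp add: aug_objective_split[OF finite_T] perm_value_def)
  note bounds = secondary_objective_bounds[OF aug_feasible_perm_matrix finite_T eps'_pos,
      where q = q and P = P and x = x]
  obtain g0 where g0: "g0 \<in> assignments" "perm_value g0 = rect_value" using rect_value_attained by blast
  have "rect_value \<le> ?AO (perm_matrix g0)" using split[of g0] bounds(1)[OF g0(1)] g0(2) by linarith
  also have "\<dots> \<le> ?AO \<alpha>" using max g0(1) by blast
  finally have "perm_value g = rect_value" if "g \<in> assignments" "0 < \<mu> g" for g
    using aug_optimal_mixes_optimal_vertices[OF opt \<mu> that] split[of g] bounds(2)[OF that(1)] small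
      perm_value_near_max[OF that(1)] by linarith
  with \<mu>(1) have "\<mu> g * perm_value g = \<mu> g * rect_value" if "g \<in> assignments" for g
    using that by (cases "\<mu> g = 0") auto
  then have "(\<Sum>g\<in>assignments. \<mu> g * perm_value g) = (\<Sum>g\<in>assignments. \<mu> g * rect_value)"
    by (rule sum.cong[OF refl])
  then show ?thesis
    using restrict_objective_decomposition[OF \<mu>(3)] \<mu>(2) by (simp flip: sum_distrib_right)
qed

theorem aug_optimal_restrict_rect_optimal:
  assumes "card A / value_gap < eps'" "aug_optimal eps eps' A T P K x q \<alpha>"
  shows "rect_optimal eps A T P x q (\<lambda>i j. \<alpha> i (Inl j))"
proof -
  have "aug_feasible A T K \<alpha>" using assms(2) by (simp add: aug_optimal_def)
  then show ?thesis
    unfolding rect_optimal_def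
    using aug_feasible_restrict[OF _ finite_T P_in_T] rect_feasible_objective_le
      aug_optimal_restrict_value[OF assms] by simp
qed

end

theorem mainTheorem3:
  fixes A :: "'a set" and T :: "'t set" and P :: 't
    and x :: "'a \<Rightarrow> real ^ 'm" and q :: "'t \<Rightarrow> real ^ 'm" and eps :: real
  assumes "finite A" and "finite T" and "P \<in> T" and "eps > 0"
    and "card A > card T"
  shows "\<exists>eps0 > 0. \<forall>eps' > eps0. \<forall>\<alpha>.
           aug_optimal eps eps' A T P (card A - card T) x q \<alpha> \<longrightarrow>
           rect_optimal eps A T P x q (\<lambda>i j. \<alpha> i (Inl j))"
proof -
  interpret secondary_tasks eps A T P "card A - card T" x q
    using assms by unfold_locales auto
  show ?thesis
  proof (intro exI[of _ "card A / value_gap"] conjI allI impI)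
    show "0 < card A / value_gap" using value_gap_pos assms(5) by simp
    fix eps' \<alpha>
    assume "card A / value_gap < eps'" "aug_optimal eps eps' A T P (card A - card T) x q \<alpha>"
    then show "rect_optimal eps A T P x q (\<lambda>i j. \<alpha> i (Inl j))"
      by (rule aug_optimal_restrict_rect_optimal)
  qed
qed

end
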